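(* Consider the periodic robust learning MPC scheme described in the context, and suppose the following assumption holds: a closed-loop trajectory $\{\mathbf{z}^0,\mathbf{v}^0\}$ of iteration $0$ (with disturbance parameter $\theta^0$) is given which satisfies the nominal dynamics and the tightened constraints, and the feasible disturbance sets of iteration $0$ satisfy $\mathbb{W}_t^0 \supseteq \mathbb{W}_\theta$ for all $t\in\{0,\dots,T\}$. Then for every iteration $j\geq 1$ and every time step $t$ at which the LMPC problem is solved (i.e. every $t\in\{0,1,\dots,T-N\}$), the LMPC optimization problem at time $t$ of iteration $j$ is feasible.
   Context: Let $T\in\mathbb{N}$ be the period/task length and $N\le T$ the prediction horizon; $\mathbb{N}_a^b=\{a,a+1,\dots,b\}$. For $t\in\mathbb{N}_0^T$ let $A_t\in\mathbb{R}^{n\times n}$, $B_t\in\mathbb{R}^{n\times m}$, $C_t\in\mathbb{R}^{n\times d}$ be given, together with tightened constraint data $\bar F_t,\bar G_t,\bar f_t$ (polytopic constraints $\bar F_t z+\bar G_t v\le \bar f_t$), gains $K_t$ and $\Phi_t=A_t+B_tK_t$. Let $(\theta,t)\mapsto w_{\theta,t}\in\mathbb{R}^d$ be a given (known) parametrized disturbance profile (e.g. a truncated Fourier series $w_{\theta,t}=a_0+\sum_{q=1}^M a_q\sin(2\pi qt/T)+b_q\cos(2\pi qt/T)$ with $\theta=(a_0,a_q,b_q)_q$), with parameters $\theta$ ranging in a set $\mathbb{W}_\theta$. Each iteration $j=0,1,2,\dots$ has a parameter $\theta^j\in\mathbb{W}_\theta$, known at iteration $j$, and nominal dynamics $z_{k+1}=A_kz_k+B_kv_k+C_kw_{\theta^j,k}$,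 all iterations starting from $z_0^j=x_s$. Stage costs $l_t(z,v)$ are given. Shifting: for a past iteration $i$ with recorded closed-loop states $\mathbf{z}^i=[z_0^i,\dots,z_T^i]$, inputs $\mathbf{v}^i=[v_0^i,\dots,v_T^i]$ and parameter $\theta^i$, a parameter $\theta$ and a start time $t$, define $e_{t|t}=0$, $e_{k+1|t}=\Phi_k e_{k|t}+C_k(w_{\theta,k}-w_{\theta^i,k})$, $v_{k|t}=v_k^i+K_ke_{k|t}$, $z_{k|t}=z_k^i+e_{k|t}$ for $k\in\mathbb{N}_t^T$; when $\theta=\theta^j$ these are denoted $z_{k|t}^{i,j},v_{k|t}^{i,j}$. The feasible disturbance set $\mathbb{W}_t^i$ is the set of $\theta$ for which the resulting shifted pairs satisfy $\bar F_k z_{k|t}+\bar G_k v_{k|t}\le \bar f_k$ for all $k\in\mathbb{N}_t^T$. Safe sets and cost-to-go at iteration $j$: $\mathbb{SS}_k^j=\{z_{k|t}^{i,j}: i\in\mathbb{N}_0^{j-1},\ t\in\mathbb{N}_0^k,\ \theta^j\in\mathbb{W}_t^i\}$ (a finite set of points), shifted costs $J_{k|t}^{i,j}=\sum_{r=k}^T l_r(z_{r|t}^{i,j},v_{r|t}^{i,j})$, and $Q_k^j(z)=\min\{J_{k|t}^{i,j}: i\in\mathbb{N}_0^{j-1}, t\in\mathbb{N}_0^k, \theta^j\in\mathbb{W}_t^i, z_{k|t}^{i,j}=z\}$ if $z\in\mathbb{SS}_k^j$, and $Q_k^j(z)=+\infty$ otherwise. LMPC problem at time $t\in\mathbb{N}_0^{T-N}$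 of iteration $j$, given current nominal state $z_t^j$: minimize $\sum_{k=t}^{t+N-1}l_k(z_{k|t},v_{k|t})+Q_{t+N}^j(z_{t+N|t})$ over $v_{t|t},\dots,v_{t+N-1|t}$ subject to $z_{t|t}=z_t^j$, $z_{k+1|t}=A_kz_{k|t}+B_kv_{k|t}+C_kw_{\theta^j,k}$, $\bar F_kz_{k|t}+\bar G_kv_{k|t}\le\bar f_k$ for $k\in\mathbb{N}_t^{t+N-1}$, and $z_{t+N|t}\in\mathbb{SS}_{t+N}^j$. With optimal inputs $v^{j,*}_{k|t}$, the closed-loop input is $v_t^j=v_{t|t}^{j,*}$ if $t+N\le T$ and $v_t^j=v_{t|T-N}^{j,*}$ if $t+N>T$, and $z_{t+1}^j=A_tz_t^j+B_tv_t^j+C_tw_{\theta^j,t}$. The closed-loop $\{\mathbf{z}^j,\mathbf{v}^j\}$ together with $\theta^j$ is recorded and used as historical data for later iterations. *)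

theory Defs
  imports "HOL-Analysis.Analysis" "HOL-Library.Extended_Real"
begin

text \<open>The order on real^'p is componentwise.\<close>

definition Phi :: "(nat \<Rightarrow> real^'n^'n) \<Rightarrow> (nat \<Rightarrow> real^'m^'n) \<Rightarrow> (nat \<Rightarrow> real^'n^'m)
    \<Rightarrow> nat \<Rightarrow> real^'n^'n" where
  "Phi A B K k = A k + B k ** K k"

definition cons_ok :: "(nat \<Rightarrow> real^'n^'p) \<Rightarrow> (nat \<Rightarrow> real^'m^'p) \<Rightarrow> (nat \<Rightarrow> real^'p)
    \<Rightarrow> nat \<Rightarrow> real^'n \<Rightarrow> real^'m \<Rightarrow> bool" where
  "cons_ok F G f k z v \<longleftrightarrow> F k *v z + G k *v v \<le> f k"

text \<open>Shifting error: shift_err ... t n = e_{t+n|t}.\<close>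
primrec shift_err :: "(nat \<Rightarrow> real^'n^'n) \<Rightarrow> (nat \<Rightarrow> real^'m^'n) \<Rightarrow> (nat \<Rightarrow> real^'d^'n)
    \<Rightarrow> (nat \<Rightarrow> real^'n^'m) \<Rightarrow> ('th \<Rightarrow> nat \<Rightarrow> real^'d) \<Rightarrow> 'th \<Rightarrow> 'th \<Rightarrow> nat \<Rightarrow> nat \<Rightarrow> real^'n"
  where
  "shift_err A B C K w \<theta> \<theta>i t 0 = 0"
| "shift_err A B C K w \<theta> \<theta>i t (Suc n) =
     Phi A B K (t + n) *v shift_err A B C K w \<theta> \<theta>i t n + C (t + n) *v (w \<theta> (t + n) - w \<theta>i (t + n))"

text \<open>Shifted states z_{k|t} and inputs v_{k|t} (meaningful for k >= t) of past trajectory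
  (zi, vi, \<theta>i) for parameter \<theta>.\<close>
definition shift_z :: "(nat \<Rightarrow> real^'n^'n) \<Rightarrow> (nat \<Rightarrow> real^'m^'n) \<Rightarrow> (nat \<Rightarrow> real^'d^'n)
    \<Rightarrow> (nat \<Rightarrow> real^'n^'m) \<Rightarrow> ('th \<Rightarrow> nat \<Rightarrow> real^'d)
    \<Rightarrow> (nat \<Rightarrow> real^'n) \<Rightarrow> 'th \<Rightarrow> 'th \<Rightarrow> nat \<Rightarrow> nat \<Rightarrow> real^'n" where
  "shift_z A B C K w zi \<theta>i \<theta> t k = zi k + shift_err A B C K w \<theta> \<theta>i t (k - t)"

definition shift_v :: "(nat \<Rightarrow> real^'n^'n) \<Rightarrow> (nat \<Rightarrow> real^'m^'n) \<Rightarrow> (nat \<Rightarrow> real^'d^'n)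
    \<Rightarrow> (nat \<Rightarrow> real^'n^'m) \<Rightarrow> ('th \<Rightarrow> nat \<Rightarrow> real^'d)
    \<Rightarrow> (nat \<Rightarrow> real^'m) \<Rightarrow> 'th \<Rightarrow> 'th \<Rightarrow> nat \<Rightarrow> nat \<Rightarrow> real^'m" where
  "shift_v A B C K w vi \<theta>i \<theta> t k = vi k + K k *v shift_err A B C K w \<theta> \<theta>i t (k - t)"

definition feas_W :: "(nat \<Rightarrow> real^'n^'n) \<Rightarrow> (nat \<Rightarrow> real^'m^'n) \<Rightarrow> (nat \<Rightarrow> real^'d^'n)
    \<Rightarrow> (nat \<Rightarrow> real^'n^'m) \<Rightarrow> (nat \<Rightarrow> real^'n^'p) \<Rightarrow> (nat \<Rightarrow> real^'m^'p) \<Rightarrow> (nat \<Rightarrow> real^'p)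
    \<Rightarrow> ('th \<Rightarrow> nat \<Rightarrow> real^'d) \<Rightarrow> nat
    \<Rightarrow> (nat \<Rightarrow> real^'n) \<Rightarrow> (nat \<Rightarrow> real^'m) \<Rightarrow> 'th \<Rightarrow> nat \<Rightarrow> 'th set" where
  "feas_W A B C K F G f w T zi vi \<theta>i t =
     {\<theta>. \<forall>k\<in>{t..T}. cons_ok F G f k (shift_z A B C K w zi \<theta>i \<theta> t k) (shift_v A B C K w vi \<theta>i \<theta> t k)}"

definition safe_set :: "(nat \<Rightarrow> real^'n^'n) \<Rightarrow> (nat \<Rightarrow> real^'m^'n) \<Rightarrow> (nat \<Rightarrow> real^'d^'n)
    \<Rightarrow> (nat \<Rightarrow> real^'n^'m) \<Rightarrow> (nat \<Rightarrow> real^'n^'p) \<Rightarrow> (nat \<Rightarrow> real^'m^'p) \<Rightarrow> (nat \<Rightarrow> real^'p)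
    \<Rightarrow> ('th \<Rightarrow> nat \<Rightarrow> real^'d) \<Rightarrow> nat
    \<Rightarrow> (nat \<Rightarrow> nat \<Rightarrow> real^'n) \<Rightarrow> (nat \<Rightarrow> nat \<Rightarrow> real^'m) \<Rightarrow> (nat \<Rightarrow> 'th)
    \<Rightarrow> nat \<Rightarrow> nat \<Rightarrow> (real^'n) set" where
  "safe_set A B C K F G f w T zs vs \<theta>s j k =
     {shift_z A B C K w (zs i) (\<theta>s i) (\<theta>s j) t k | i t.
        i < j \<and> t \<le> k \<and> \<theta>s j \<in> feas_W A B C K F G f w T (zs i) (vs i) (\<theta>s i) t}"

definition shift_cost :: "(nat \<Rightarrow> real^'n^'n) \<Rightarrow> (nat \<Rightarrow> real^'m^'n) \<Rightarrow> (nat \<Rightarrow> real^'d^'n)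
    \<Rightarrow> (nat \<Rightarrow> real^'n^'m) \<Rightarrow> ('th \<Rightarrow> nat \<Rightarrow> real^'d) \<Rightarrow> (nat \<Rightarrow> real^'n \<Rightarrow> real^'m \<Rightarrow> real)
    \<Rightarrow> nat \<Rightarrow> (nat \<Rightarrow> nat \<Rightarrow> real^'n) \<Rightarrow> (nat \<Rightarrow> nat \<Rightarrow> real^'m) \<Rightarrow> (nat \<Rightarrow> 'th)
    \<Rightarrow> nat \<Rightarrow> nat \<Rightarrow> nat \<Rightarrow> nat \<Rightarrow> real" where
  "shift_cost A B C K w l T zs vs \<theta>s i j t k =
     (\<Sum>r = k..T. l r (shift_z A B C K w (zs i) (\<theta>s i) (\<theta>s j) t r)
                    (shift_v A B C K w (vs i) (\<theta>s i) (\<theta>s j) t r))"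

definition Qcost :: "(nat \<Rightarrow> real^'n^'n) \<Rightarrow> (nat \<Rightarrow> real^'m^'n) \<Rightarrow> (nat \<Rightarrow> real^'d^'n)
    \<Rightarrow> (nat \<Rightarrow> real^'n^'m) \<Rightarrow> (nat \<Rightarrow> real^'n^'p) \<Rightarrow> (nat \<Rightarrow> real^'m^'p) \<Rightarrow> (nat \<Rightarrow> real^'p)
    \<Rightarrow> ('th \<Rightarrow> nat \<Rightarrow> real^'d) \<Rightarrow> (nat \<Rightarrow> real^'n \<Rightarrow> real^'m \<Rightarrow> real) \<Rightarrow> nat
    \<Rightarrow> (nat \<Rightarrow> nat \<Rightarrow> real^'n) \<Rightarrow> (nat \<Rightarrow> nat \<Rightarrow> real^'m) \<Rightarrow> (nat \<Rightarrow> 'th)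
    \<Rightarrow> nat \<Rightarrow> nat \<Rightarrow> real^'n \<Rightarrow> ereal" where
  "Qcost A B C K F G f w l T zs vs \<theta>s j k z =
     (if z \<in> safe_set A B C K F G f w T zs vs \<theta>s j k
      then ereal (Min {shift_cost A B C K w l T zs vs \<theta>s i j t k | i t.
             i < j \<and> t \<le> k \<and> \<theta>s j \<in> feas_W A B C K F G f w T (zs i) (vs i) (\<theta>s i) t
             \<and> shift_z A B C K w (zs i) (\<theta>s i) (\<theta>s j) t k = z})
      else \<infinity>)"

text \<open>Predicted nominal state: pred_z ... \<theta> t z V n = z_{t+n|t}, starting from z_{t|t} = z,
  with input sequence V (V k = v_{k|t}).\<close>
primrec pred_z :: "(nat \<Rightarrow> real^'n^'n) \<Rightarrow> (nat \<Rightarrow> real^'m^'n) \<Rightarrow> (nat \<Rightarrow> real^'d^'n)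
    \<Rightarrow> ('th \<Rightarrow> nat \<Rightarrow> real^'d) \<Rightarrow> 'th \<Rightarrow> nat \<Rightarrow> real^'n \<Rightarrow> (nat \<Rightarrow> real^'m) \<Rightarrow> nat \<Rightarrow> real^'n"
  where
  "pred_z A B C w \<theta> t z V 0 = z"
| "pred_z A B C w \<theta> t z V (Suc n) =
     A (t + n) *v pred_z A B C w \<theta> t z V n + B (t + n) *v V (t + n) + C (t + n) *v w \<theta> (t + n)"

definition lmpc_feasible :: "(nat \<Rightarrow> real^'n^'n) \<Rightarrow> (nat \<Rightarrow> real^'m^'n) \<Rightarrow> (nat \<Rightarrow> real^'d^'n)
    \<Rightarrow> (nat \<Rightarrow> real^'n^'m) \<Rightarrow> (nat \<Rightarrow> real^'n^'p) \<Rightarrow> (nat \<Rightarrow> real^'m^'p) \<Rightarrow> (nat \<Rightarrow> real^'p)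
    \<Rightarrow> ('th \<Rightarrow> nat \<Rightarrow> real^'d) \<Rightarrow> nat \<Rightarrow> nat
    \<Rightarrow> (nat \<Rightarrow> nat \<Rightarrow> real^'n) \<Rightarrow> (nat \<Rightarrow> nat \<Rightarrow> real^'m) \<Rightarrow> (nat \<Rightarrow> 'th)
    \<Rightarrow> nat \<Rightarrow> nat \<Rightarrow> real^'n \<Rightarrow> (nat \<Rightarrow> real^'m) \<Rightarrow> bool" where
  "lmpc_feasible A B C K F G f w T N zs vs \<theta>s j t z V \<longleftrightarrow>
     (\<forall>k\<in>{t..<t+N}. cons_ok F G f k (pred_z A B C w (\<theta>s j) t z V (k - t)) (V k)) \<and>
     pred_z A B C w (\<theta>s j) t z V N \<in> safe_set A B C K F G f w T zs vs \<theta>s j (t + N)"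

definition lmpc_cost :: "(nat \<Rightarrow> real^'n^'n) \<Rightarrow> (nat \<Rightarrow> real^'m^'n) \<Rightarrow> (nat \<Rightarrow> real^'d^'n)
    \<Rightarrow> (nat \<Rightarrow> real^'n^'m) \<Rightarrow> (nat \<Rightarrow> real^'n^'p) \<Rightarrow> (nat \<Rightarrow> real^'m^'p) \<Rightarrow> (nat \<Rightarrow> real^'p)
    \<Rightarrow> ('th \<Rightarrow> nat \<Rightarrow> real^'d) \<Rightarrow> (nat \<Rightarrow> real^'n \<Rightarrow> real^'m \<Rightarrow> real) \<Rightarrow> nat \<Rightarrow> nat
    \<Rightarrow> (nat \<Rightarrow> nat \<Rightarrow> real^'n) \<Rightarrow> (nat \<Rightarrow> nat \<Rightarrow> real^'m) \<Rightarrow> (nat \<Rightarrow> 'th)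
    \<Rightarrow> nat \<Rightarrow> nat \<Rightarrow> real^'n \<Rightarrow> (nat \<Rightarrow> real^'m) \<Rightarrow> ereal" where
  "lmpc_cost A B C K F G f w l T N zs vs \<theta>s j t z V =
     ereal (\<Sum>k = t..<t+N. l k (pred_z A B C w (\<theta>s j) t z V (k - t)) (V k))
     + Qcost A B C K F G f w l T zs vs \<theta>s j (t + N) (pred_z A B C w (\<theta>s j) t z V N)"

definition lmpc_optimal :: "(nat \<Rightarrow> real^'n^'n) \<Rightarrow> (nat \<Rightarrow> real^'m^'n) \<Rightarrow> (nat \<Rightarrow> real^'d^'n)
    \<Rightarrow> (nat \<Rightarrow> real^'n^'m) \<Rightarrow> (nat \<Rightarrow> real^'n^'p) \<Rightarrow> (nat \<Rightarrow> real^'m^'p) \<Rightarrow> (nat \<Rightarrow> real^'p)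
    \<Rightarrow> ('th \<Rightarrow> nat \<Rightarrow> real^'d) \<Rightarrow> (nat \<Rightarrow> real^'n \<Rightarrow> real^'m \<Rightarrow> real) \<Rightarrow> nat \<Rightarrow> nat
    \<Rightarrow> (nat \<Rightarrow> nat \<Rightarrow> real^'n) \<Rightarrow> (nat \<Rightarrow> nat \<Rightarrow> real^'m) \<Rightarrow> (nat \<Rightarrow> 'th)
    \<Rightarrow> nat \<Rightarrow> nat \<Rightarrow> real^'n \<Rightarrow> (nat \<Rightarrow> real^'m) \<Rightarrow> bool" where
  "lmpc_optimal A B C K F G f w l T N zs vs \<theta>s j t z V \<longleftrightarrow>
     lmpc_feasible A B C K F G f w T N zs vs \<theta>s j t z V \<and>
     (\<forall>V'. lmpc_feasible A B C K F G f w T N zs vs \<theta>s j t z V' \<longrightarrow>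
        lmpc_cost A B C K F G f w l T N zs vs \<theta>s j t z V \<le> lmpc_cost A B C K F G f w l T N zs vs \<theta>s j t z V')"

end

theory Submission
  imports Defs
begin

text \<open>At time 0 the iteration-0 trajectory, shifted to the disturbance
  parameter of iteration j, is a feasible plan: it obeys the nominal dynamics for that parameter,
  and it satisfies the constraints up to T because every parameter lies in W_0^0. Later, the
  terminal state of the plan at time t is a shifted state z_{t+N|s} of some past iteration i;
  appending the shifted input v_{t+N|s} gives a plan at time t+1, admissible because
  z_{t+N+1|s} again belongs to the safe set and (z_{t+N|s}, v_{t+N|s}) meets the constraints.\<close>

lemma shift_z_Suc:
  assumes dyn: "zi (Suc k) = A k *v zi k + B k *v vi k + C k *v w \<theta>i k" and "t \<le> k"
  shows "shift_z A B C K w zi \<theta>i \<theta> t (Suc k) =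
     A k *v shift_z A B C K w zi \<theta>i \<theta> t k + B k *v shift_v A B C K w vi \<theta>i \<theta> t k + C k *v w \<theta> k"
proof -
  let ?e = "shift_err A B C K w \<theta> \<theta>i t (k - t)"
  have "Suc k - t = Suc (k - t)" "t + (k - t) = k" using \<open>t \<le> k\<close> by auto
  then have "shift_z A B C K w zi \<theta>i \<theta> t (Suc k) =
      zi (Suc k) + (Phi A B K k *v ?e + C k *v (w \<theta> k - w \<theta>i k))"
    unfolding shift_z_def by simp
  also have "\<dots> = A k *v (zi k + ?e) + B k *v (vi k + K k *v ?e) + C k *v w \<theta> k"
    unfolding dyn Phi_def by (simp add: algebra_simps matrix_vector_mul_assoc)
  finally show ?thesis unfolding shift_z_def shift_v_def by simp
qed

lemma pred_z_shifted:
  assumes "\<And>k. t \<le> k \<Longrightarrow> k < t + n \<Longrightarrow> zi (Suc k) = A k *v zi k + B k *v vi k + C k *v w \<theta>i k"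
  shows "pred_z A B C w \<theta> t (zi t) (shift_v A B C K w vi \<theta>i \<theta> t) n =
    shift_z A B C K w zi \<theta>i \<theta> t (t + n)"
  using assms
proof (induction n)
  case 0
  then show ?case by (simp add: shift_z_def)
next
  case (Suc n)
  have dyn: "zi (Suc (t + n)) =
      A (t + n) *v zi (t + n) + B (t + n) *v vi (t + n) + C (t + n) *v w \<theta>i (t + n)"
    using Suc.prems by simp
  show ?case
    using Suc shift_z_Suc[where A = A and B = B and C = C and w = w and vi = vi and \<theta>i = \<theta>i
        and t = t and K = K and \<theta> = \<theta>, OF dyn]
    by simp
qed

lemma pred_z_cong:
  assumes "\<And>k. t \<le> k \<Longrightarrow> k < t + n \<Longrightarrow> V' k = V k"
  shows "pred_z A B C w \<theta> t z V' n = pred_z A B C w \<theta> t z V n"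
  using assms by (induction n) auto

lemma pred_z_Suc_start:
  "pred_z A B C w \<theta> (Suc t) (pred_z A B C w \<theta> t z V 1) V n = pred_z A B C w \<theta> t z V (Suc n)"
  by (induction n) simp_all

lemma shift_z_in_safe_set:
  assumes "i < j" "s \<le> k" "\<theta>s j \<in> feas_W A B C K F G f w T (zs i) (vs i) (\<theta>s i) s"
  shows "shift_z A B C K w (zs i) (\<theta>s i) (\<theta>s j) s k \<in> safe_set A B C K F G f w T zs vs \<theta>s j k"
  unfolding safe_set_def using assms by blast

lemma lmpc_feasible_shifted:
  assumes "i < j" and "t + N \<le> T"
    and feas: "\<theta>s j \<in> feas_W A B C K F G f w T (zs i) (vs i) (\<theta>s i) t"
    and dyn: "\<And>k. t \<le> k \<Longrightarrow> k < t + N \<Longrightarrow>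
      zs i (Suc k) = A k *v zs i k + B k *v vs i k + C k *v w (\<theta>s i) k"
  shows "lmpc_feasible A B C K F G f w T N zs vs \<theta>s j t (zs i t)
    (shift_v A B C K w (vs i) (\<theta>s i) (\<theta>s j) t)"
proof -
  let ?P = "pred_z A B C w (\<theta>s j) t (zs i t) (shift_v A B C K w (vs i) (\<theta>s i) (\<theta>s j) t)"
  have P: "?P n = shift_z A B C K w (zs i) (\<theta>s i) (\<theta>s j) t (t + n)" if "n \<le> N" for n
    using that dyn by (intro pred_z_shifted) auto
  have "\<forall>k\<in>{t..<t + N}. cons_ok F G f k (?P (k - t)) (shift_v A B C K w (vs i) (\<theta>s i) (\<theta>s j) t k)"
    using feas \<open>t + N \<le> T\<close> P unfolding feas_W_def by auto
  moreover have "?P N \<in> safe_set A B C K F G f w T zs vs \<theta>s j (t + N)"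
    unfolding P[OF order_refl] using \<open>i < j\<close> feas by (intro shift_z_in_safe_set) auto
  ultimately show ?thesis unfolding lmpc_feasible_def by blast
qed

lemma lmpc_feasible_Suc:
  assumes feas: "lmpc_feasible A B C K F G f w T N zs vs \<theta>s j t z V"
    and "1 \<le> N" "t + N < T"
    and dyn: "\<And>i k. i < j \<Longrightarrow> k < T \<Longrightarrow>
      zs i (Suc k) = A k *v zs i k + B k *v vs i k + C k *v w (\<theta>s i) k"
  shows "\<exists>V'. lmpc_feasible A B C K F G f w T N zs vs \<theta>s j (Suc t)
    (pred_z A B C w (\<theta>s j) t z V 1) V'"
proof -
  let ?P = "pred_z A B C w (\<theta>s j) t z V"
  have cons: "cons_ok F G f k (?P (k - t)) (V k)" if "t \<le> k" "k < t + N" for k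
    using feas that unfolding lmpc_feasible_def by auto
  have "?P N \<in> safe_set A B C K F G f w T zs vs \<theta>s j (t + N)"
    using feas unfolding lmpc_feasible_def by blast
  then obtain i s where "i < j" "s \<le> t + N"
    and fw: "\<theta>s j \<in> feas_W A B C K F G f w T (zs i) (vs i) (\<theta>s i) s"
    and PN: "?P N = shift_z A B C K w (zs i) (\<theta>s i) (\<theta>s j) s (t + N)"
    unfolding safe_set_def by blast
  define V' where "V' = V(t + N := shift_v A B C K w (vs i) (\<theta>s i) (\<theta>s j) s (t + N))"
  let ?P' = "pred_z A B C w (\<theta>s j) t z V'"
  have P'_eq: "?P' n = ?P n" if "n \<le> N" for n
    using that unfolding V'_def by (intro pred_z_cong) auto
  have P'_last: "?P' (Suc N) = shift_z A B C K w (zs i) (\<theta>s i) (\<theta>s j) s (Suc (t + N))"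
    using P'_eq[OF order_refl] PN dyn[OF \<open>i < j\<close> \<open>t + N < T\<close>] \<open>s \<le> t + N\<close>
    by (simp add: shift_z_Suc V'_def)
  have restart: "pred_z A B C w (\<theta>s j) (Suc t) (?P 1) V' (k - Suc t) = ?P' (k - t)"
    if "Suc t \<le> k" for k
  proof -
    have "Suc (k - Suc t) = k - t" using that by simp
    then show ?thesis
      using P'_eq[of 1] \<open>1 \<le> N\<close> pred_z_Suc_start[of A B C w "\<theta>s j" t z V' "k - Suc t"] by simp
  qed
  have "cons_ok F G f k (pred_z A B C w (\<theta>s j) (Suc t) (?P 1) V' (k - Suc t)) (V' k)"
    if "Suc t \<le> k" "k < Suc t + N" for k
  proof (cases "k = t + N")
    case True
    then show ?thesis
      using restart[OF that(1)] fw P'_eq[OF order_refl] PN \<open>s \<le> t + N\<close> \<open>t + N < T\<close>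
      unfolding feas_W_def V'_def by auto
  next
    case False
    then show ?thesis
      using that restart[OF that(1)] cons[of k] P'_eq[of "k - t"] unfolding V'_def by auto
  qed
  moreover have "pred_z A B C w (\<theta>s j) (Suc t) (?P 1) V' N
      \<in> safe_set A B C K F G f w T zs vs \<theta>s j (Suc t + N)"
    using restart[of "Suc t + N"] P'_last \<open>i < j\<close> \<open>s \<le> t + N\<close> fw
    by (simp add: shift_z_in_safe_set)
  ultimately have "lmpc_feasible A B C K F G f w T N zs vs \<theta>s j (Suc t) (?P 1) V'"
    unfolding lmpc_feasible_def by auto
  then show ?thesis by blast
qed

theorem theorem1:
  fixes A :: "nat \<Rightarrow> real^'n^'n" and B :: "nat \<Rightarrow> real^'m^'n" and C :: "nat \<Rightarrow> real^'d^'n"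
    and K :: "nat \<Rightarrow> real^'n^'m"
    and F :: "nat \<Rightarrow> real^'n^'p" and G :: "nat \<Rightarrow> real^'m^'p" and f :: "nat \<Rightarrow> real^'p"
    and w :: "'th \<Rightarrow> nat \<Rightarrow> real^'d" and W\<theta> :: "'th set"
    and l :: "nat \<Rightarrow> real^'n \<Rightarrow> real^'m \<Rightarrow> real"
    and T N :: nat and xs :: "real^'n"
    and zs :: "nat \<Rightarrow> nat \<Rightarrow> real^'n" and vs :: "nat \<Rightarrow> nat \<Rightarrow> real^'m" and \<theta>s :: "nat \<Rightarrow> 'th"
  assumes hN: "1 \<le> N" "N \<le> T"
    and h\<theta>: "\<And>j. \<theta>s j \<in> W\<theta>"
    \<comment> \<open>assumption on iteration 0\<close>
    and h0_init: "zs 0 0 = xs"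
    and h0_dyn: "\<And>k. k < T \<Longrightarrow> zs 0 (Suc k) = A k *v zs 0 k + B k *v vs 0 k + C k *v w (\<theta>s 0) k"
    and h0_cons: "\<And>k. k \<le> T \<Longrightarrow> cons_ok F G f k (zs 0 k) (vs 0 k)"
    and h0_W: "\<And>t. t \<le> T \<Longrightarrow> W\<theta> \<subseteq> feas_W A B C K F G f w T (zs 0) (vs 0) (\<theta>s 0) t"
    \<comment> \<open>iterations j \<ge> 1 are closed loops of the LMPC scheme\<close>
    and hj_init: "\<And>j. 1 \<le> j \<Longrightarrow> zs j 0 = xs"
    and hj_dyn: "\<And>j k. 1 \<le> j \<Longrightarrow> k < T \<Longrightarrow>
        zs j (Suc k) = A k *v zs j k + B k *v vs j k + C k *v w (\<theta>s j) k"
    and hj_ctrl: "\<And>j t. 1 \<le> j \<Longrightarrow> t < T - N \<Longrightarrow>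
        (\<exists>V. lmpc_feasible A B C K F G f w T N zs vs \<theta>s j t (zs j t) V) \<Longrightarrow>
        (\<exists>V. lmpc_optimal A B C K F G f w l T N zs vs \<theta>s j t (zs j t) V \<and> vs j t = V t)"
    and hj_ctrl_last: "\<And>j. 1 \<le> j \<Longrightarrow>
        (\<exists>V. lmpc_feasible A B C K F G f w T N zs vs \<theta>s j (T - N) (zs j (T - N)) V) \<Longrightarrow>
        (\<exists>V. lmpc_optimal A B C K F G f w l T N zs vs \<theta>s j (T - N) (zs j (T - N)) V \<and>
             (\<forall>k\<in>{T - N..<T}. vs j k = V k))"
  shows "\<forall>j\<ge>1. \<forall>t\<le>T - N. \<exists>V. lmpc_feasible A B C K F G f w T N zs vs \<theta>s j t (zs j t) V"
proof (intro allI impI)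
  fix j t :: nat
  assume "1 \<le> j" and "t \<le> T - N"
  have dyn: "zs i (Suc k) = A k *v zs i k + B k *v vs i k + C k *v w (\<theta>s i) k" if "k < T" for i k
    using that h0_dyn hj_dyn[of i k] by (cases "i = 0") auto
  show "\<exists>V. lmpc_feasible A B C K F G f w T N zs vs \<theta>s j t (zs j t) V"
    using \<open>t \<le> T - N\<close>
  proof (induction t)
    case 0
    have "\<theta>s j \<in> feas_W A B C K F G f w T (zs 0) (vs 0) (\<theta>s 0) 0"
      using h0_W h\<theta> by blast
    then have "lmpc_feasible A B C K F G f w T N zs vs \<theta>s j 0 (zs 0 0)
        (shift_v A B C K w (vs 0) (\<theta>s 0) (\<theta>s j) 0)"
      using \<open>1 \<le> j\<close> hN dyn by (intro lmpc_feasible_shifted) auto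
    then show ?case using h0_init hj_init[OF \<open>1 \<le> j\<close>] by auto
  next
    case (Suc t)
    then have "t < T - N" and "\<exists>V. lmpc_feasible A B C K F G f w T N zs vs \<theta>s j t (zs j t) V"
      by simp_all
    then obtain V where opt: "lmpc_optimal A B C K F G f w l T N zs vs \<theta>s j t (zs j t) V"
      and "vs j t = V t"
      using hj_ctrl[OF \<open>1 \<le> j\<close>] by blast
    have "zs j (Suc t) = pred_z A B C w (\<theta>s j) t (zs j t) V 1"
      using hj_dyn[OF \<open>1 \<le> j\<close>, of t] \<open>vs j t = V t\<close> Suc.prems by simp
    moreover have "lmpc_feasible A B C K F G f w T N zs vs \<theta>s j t (zs j t) V"
      using opt unfolding lmpc_optimal_def by blast
    moreover have "t + N < T" using \<open>t < T - N\<close> by simp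
    ultimately show ?case using lmpc_feasible_Suc hN(1) dyn by metis
  qed
qed

end
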